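(* Let $A,B$ be interior algebras. Then $\{\mathcal{O}(h): h\in\mathrm{hom}(A,B)\}=\mathrm{hom}(\mathcal{O}(A),\mathcal{O}(B))$ if and only if every interior algebra homomorphism $h\colon A^*\to B^*$ has an extension to a homomorphism $A\to B$.
   Context: An interior algebra $\langle B,g\rangle$ is a Boolean algebra with an operator $g$ satisfying $g(1)=1$, $g(xy)=g(x)g(y)$, $g(x)\le x$, $gg(x)=g(x)$; $a$ is open if $g(a)=a$. $\mathcal{O}(B)=B^\circ$ is the Heyting algebra of open elements with $a\Rightarrow b=g(-a+b)$, and $\mathcal{O}(h)$ is the restriction of a homomorphism $h$ to open elements. $\mathrm{hom}(\mathcal{O}(A),\mathcal{O}(B))$ is the set of Heyting algebra homomorphisms. $A^*$ is the subalgebra of $A$ generated by its open elements. *)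

theory Defs
  imports Main "HOL-Library.FuncSet"
begin

definition interior_alg :: "('a::boolean_algebra \<Rightarrow> 'a) \<Rightarrow> bool" where
  "interior_alg g \<longleftrightarrow> g top = top \<and> (\<forall>x y. g (inf x y) = inf (g x) (g y))
     \<and> (\<forall>x. g x \<le> x) \<and> (\<forall>x. g (g x) = g x)"

definition opens :: "('a::boolean_algebra \<Rightarrow> 'a) \<Rightarrow> 'a set" where
  "opens g = {a. g a = a}"

definition himp :: "('a::boolean_algebra \<Rightarrow> 'a) \<Rightarrow> 'a \<Rightarrow> 'a \<Rightarrow> 'a" where
  "himp g a b = g (sup (- a) b)"

definition int_hom :: "('a::boolean_algebra \<Rightarrow> 'a) \<Rightarrow> ('b::boolean_algebra \<Rightarrow> 'b) \<Rightarrow> ('a \<Rightarrow> 'b) \<Rightarrow> bool" where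
  "int_hom gA gB h \<longleftrightarrow> h bot = bot \<and> h top = top
     \<and> (\<forall>x y. h (sup x y) = sup (h x) (h y)) \<and> (\<forall>x y. h (inf x y) = inf (h x) (h y))
     \<and> (\<forall>x. h (- x) = - h x) \<and> (\<forall>x. h (gA x) = gB (h x))"

definition heyting_hom :: "('a::boolean_algebra \<Rightarrow> 'a) \<Rightarrow> ('b::boolean_algebra \<Rightarrow> 'b) \<Rightarrow> ('a \<Rightarrow> 'b) \<Rightarrow> bool" where
  "heyting_hom gA gB f \<longleftrightarrow> f \<in> opens gA \<rightarrow> opens gB \<and> f bot = bot \<and> f top = top
     \<and> (\<forall>a\<in>opens gA. \<forall>b\<in>opens gA. f (sup a b) = sup (f a) (f b)
          \<and> f (inf a b) = inf (f a) (f b) \<and> f (himp gA a b) = himp gB (f a) (f b))"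

definition bool_subalg :: "'a::boolean_algebra set \<Rightarrow> bool" where
  "bool_subalg S \<longleftrightarrow> bot \<in> S \<and> top \<in> S \<and> (\<forall>x\<in>S. \<forall>y\<in>S. sup x y \<in> S \<and> inf x y \<in> S)
     \<and> (\<forall>x\<in>S. - x \<in> S)"

definition star :: "('a::boolean_algebra \<Rightarrow> 'a) \<Rightarrow> 'a set" where
  "star g = \<Inter>{S. bool_subalg S \<and> opens g \<subseteq> S}"

definition int_hom_on :: "'a::boolean_algebra set \<Rightarrow> 'b::boolean_algebra set \<Rightarrow>
    ('a \<Rightarrow> 'a) \<Rightarrow> ('b \<Rightarrow> 'b) \<Rightarrow> ('a \<Rightarrow> 'b) \<Rightarrow> bool" where
  "int_hom_on S T gA gB h \<longleftrightarrow> h \<in> S \<rightarrow> T \<and> h bot = bot \<and> h top = top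
     \<and> (\<forall>x\<in>S. \<forall>y\<in>S. h (sup x y) = sup (h x) (h y) \<and> h (inf x y) = inf (h x) (h y))
     \<and> (\<forall>x\<in>S. h (- x) = - h x \<and> h (gA x) = gB (h x))"

end

theory Submission
  imports Defs
begin

text \<open>The subalgebra \<open>A*\<close> generated by the open elements consists of the finite joins
\<open>(a\<^sub>1 \<sqinter> -b\<^sub>1) \<squnion> \<dots> \<squnion> (a\<^sub>n \<sqinter> -b\<^sub>n)\<close> with all \<open>a\<^sub>i, b\<^sub>i\<close> open. Whether
\<open>a \<sqinter> -b\<close> lies below such a join can be decided by a condition built from \<open>\<le>\<close>,
\<open>\<squnion>\<close> and \<open>\<sqinter>\<close> on the open elements alone, so mapping each \<open>a\<^sub>i, b\<^sub>i\<close> by a bounded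
lattice homomorphism \<open>f\<close> on \<open>O(A)\<close> gives a well-defined Boolean homomorphism \<open>A* \<rightarrow> B*\<close>. If \<open>f\<close>
also preserves Heyting implication, the extension commutes with the interior operators,
because \<open>g(-\<Squnion>(a\<^sub>i \<sqinter> -b\<^sub>i)) = \<Sqinter>(a\<^sub>i \<Rightarrow> b\<^sub>i)\<close>. Conversely every homomorphism
\<open>A* \<rightarrow> B*\<close> restricts to a Heyting homomorphism on the open elements, and homomorphisms
agreeing on the open elements agree on \<open>A*\<close>. So restriction is a bijection between the
homomorphisms \<open>A* \<rightarrow> B*\<close> and the Heyting homomorphisms \<open>O(A) \<rightarrow> O(B)\<close>, and both
sides of the equivalence say that each of them comes from a homomorphism \<open>A \<rightarrow> B\<close>.\<close>

fun dnf :: "('a::boolean_algebra \<times> 'a) list \<Rightarrow> 'a" where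
  "dnf [] = bot"
| "dnf ((a, b) # xs) = sup (inf a (- b)) (dnf xs)"

lemma dnf_append [simp]: "dnf (xs @ ys) = sup (dnf xs) (dnf ys)"
  by (induction xs) (auto simp: sup_assoc)

lemma dnf_le_iff: "dnf xs \<le> y \<longleftrightarrow> (\<forall>(a, b) \<in> set xs. inf a (- b) \<le> y)"
  by (induction xs) auto

definition dnf_meet :: "('a::boolean_algebra \<times> 'a) list \<Rightarrow> ('a \<times> 'a) list \<Rightarrow> ('a \<times> 'a) list" where
  "dnf_meet xs ys = [(inf a c, sup b d). (a, b) \<leftarrow> xs, (c, d) \<leftarrow> ys]"

lemma dnf_dnf_meet: "dnf (dnf_meet xs ys) = inf (dnf xs) (dnf ys)"
proof -
  have "dnf (map (\<lambda>(c, d). (inf a c, sup b d)) ys) = inf (inf a (- b)) (dnf ys)" for a b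
    by (induction ys) (auto simp: inf_sup_distrib1 inf_aci)
  then show ?thesis
    unfolding dnf_meet_def by (induction xs) (auto simp: inf_sup_distrib2)
qed

text \<open>The lattice-theoretic criterion for \<open>a \<sqinter> -b \<le> dnf ys\<close>: it involves no complements,
so it is preserved by lattice homomorphisms.\<close>

fun covered :: "'a::lattice \<Rightarrow> 'a \<Rightarrow> ('a \<times> 'a) list \<Rightarrow> bool" where
  "covered a b [] \<longleftrightarrow> a \<le> b"
| "covered a b ((c, d) # ys) \<longleftrightarrow> covered a (sup b c) ys \<and> covered (inf a d) b ys"

lemma diff_le_dnf_iff_covered: "inf a (- b) \<le> dnf ys \<longleftrightarrow> covered a b ys"
proof (induction ys arbitrary: a b)
  case Nil
  then show ?case by (simp add: shunt2)
next
  case (Cons y ys)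
  obtain c d where y: "y = (c, d)" by fastforce
  have "inf a (- b) \<le> dnf (y # ys) \<longleftrightarrow> inf (inf a (- b)) (- inf c (- d)) \<le> dnf ys"
    by (simp only: y dnf.simps shunt2)
  also have "inf (inf a (- b)) (- inf c (- d)) = sup (inf a (- sup b c)) (inf (inf a d) (- b))"
    by (simp add: inf_sup_distrib1 inf_aci)
  finally show ?case
    using Cons.IH[of a "sup b c"] Cons.IH[of "inf a d" b] by (simp add: y)
qed

definition dnfs :: "'a::boolean_algebra set \<Rightarrow> 'a set" where
  "dnfs L = dnf ` lists (L \<times> L)"

lemma dnf_mem_dnfs: "xs \<in> lists (L \<times> L) \<Longrightarrow> dnf xs \<in> dnfs L"
  unfolding dnfs_def by (rule imageI)

lemma dnfsE:
  assumes "x \<in> dnfs L"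
  obtains xs where "xs \<in> lists (L \<times> L)" and "x = dnf xs"
  using assms unfolding dnfs_def by blast

lemma dnfs_subset:
  assumes "bool_subalg S" and "L \<subseteq> S"
  shows "dnfs L \<subseteq> S"
proof -
  have "dnf xs \<in> S" if "xs \<in> lists (L \<times> L)" for xs
    using that
  proof (induction xs rule: dnf.induct)
    case (2 a b xs)
    then have "a \<in> S" "b \<in> S" "dnf xs \<in> S"
      using assms(2) by auto
    then show ?case
      using assms(1) unfolding bool_subalg_def by simp
  qed (use assms in \<open>simp add: bool_subalg_def\<close>)
  then show ?thesis
    unfolding dnfs_def by blast
qed

locale bounded_sublattice =
  fixes L :: "'a::boolean_algebra set"
  assumes bot_mem: "bot \<in> L" and top_mem: "top \<in> L"
    and sup_mem: "x \<in> L \<Longrightarrow> y \<in> L \<Longrightarrow> sup x y \<in> L"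
    and inf_mem: "x \<in> L \<Longrightarrow> y \<in> L \<Longrightarrow> inf x y \<in> L"
begin

lemma dnf_meet_in_lists:
  "xs \<in> lists (L \<times> L) \<Longrightarrow> ys \<in> lists (L \<times> L) \<Longrightarrow> dnf_meet xs ys \<in> lists (L \<times> L)"
  by (fastforce simp: dnf_meet_def intro: sup_mem inf_mem)

lemma subset_dnfs: "L \<subseteq> dnfs L"
proof
  fix a assume "a \<in> L"
  then have "[(a, bot)] \<in> lists (L \<times> L)" by (simp add: bot_mem)
  from dnf_mem_dnfs[OF this] show "a \<in> dnfs L" by simp
qed

lemma inf_mem_dnfs: "x \<in> dnfs L \<Longrightarrow> y \<in> dnfs L \<Longrightarrow> inf x y \<in> dnfs L"
  by (elim dnfsE) (metis dnf_dnf_meet dnf_meet_in_lists dnf_mem_dnfs)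

lemma sup_mem_dnfs: "x \<in> dnfs L \<Longrightarrow> y \<in> dnfs L \<Longrightarrow> sup x y \<in> dnfs L"
  by (elim dnfsE) (metis append_in_lists_conv dnf_append dnf_mem_dnfs)

lemma compl_mem_dnfs:
  assumes "x \<in> dnfs L"
  shows "- x \<in> dnfs L"
proof -
  have "- dnf xs \<in> dnfs L" if "xs \<in> lists (L \<times> L)" for xs
    using that
  proof (induction xs rule: dnf.induct)
    case 1
    show ?case using subset_dnfs top_mem by auto
  next
    case (2 a b xs)
    have "[(top, a), (b, bot)] \<in> lists (L \<times> L)"
      using "2.prems" by (simp add: top_mem bot_mem)
    then have "dnf [(top, a), (b, bot)] \<in> dnfs L"
      by (rule dnf_mem_dnfs)
    moreover have "- dnf ((a, b) # xs) = inf (dnf [(top, a), (b, bot)]) (- dnf xs)"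
      by simp
    ultimately show ?case
      using 2 by (simp add: inf_mem_dnfs)
  qed
  then show ?thesis
    using assms by (elim dnfsE) simp
qed

lemma bool_subalg_dnfs: "bool_subalg (dnfs L)"
  unfolding bool_subalg_def
proof (intro conjI ballI)
  show "bot \<in> dnfs L" "top \<in> dnfs L"
    using subset_dnfs bot_mem top_mem by (auto simp: subset_iff)
qed (simp_all add: sup_mem_dnfs inf_mem_dnfs compl_mem_dnfs)

end

locale bounded_lattice_hom_on = bounded_sublattice L
  for L :: "'a::boolean_algebra set" +
  fixes f :: "'a \<Rightarrow> 'b::boolean_algebra"
  assumes map_bot: "f bot = bot" and map_top: "f top = top"
    and map_sup: "x \<in> L \<Longrightarrow> y \<in> L \<Longrightarrow> f (sup x y) = sup (f x) (f y)"
    and map_inf: "x \<in> L \<Longrightarrow> y \<in> L \<Longrightarrow> f (inf x y) = inf (f x) (f y)"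
begin

abbreviation map_clauses :: "('a \<times> 'a) list \<Rightarrow> ('b \<times> 'b) list" where
  "map_clauses \<equiv> map (map_prod f f)"

lemma covered_map:
  "covered a b ys \<Longrightarrow> a \<in> L \<Longrightarrow> b \<in> L \<Longrightarrow> ys \<in> lists (L \<times> L)
    \<Longrightarrow> covered (f a) (f b) (map_clauses ys)"
proof (induction a b ys rule: covered.induct)
  case (1 a b)
  then show ?case
    using map_inf[of a b] by (simp add: le_iff_inf)
next
  case (2 a b c d ys)
  then show ?case
    by (simp add: map_sup map_inf sup_mem inf_mem)
qed

lemma dnf_map_clauses_mono:
  assumes "xs \<in> lists (L \<times> L)" and "ys \<in> lists (L \<times> L)" and "dnf xs \<le> dnf ys"
  shows "dnf (map_clauses xs) \<le> dnf (map_clauses ys)"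
  unfolding dnf_le_iff
proof clarsimp
  fix a b assume ab: "(a, b) \<in> set xs"
  then have "covered a b ys"
    using assms(3) by (auto simp: dnf_le_iff simp flip: diff_le_dnf_iff_covered)
  then have "covered (f a) (f b) (map_clauses ys)"
    using ab assms(1,2) by (auto intro: covered_map)
  then show "inf (f a) (- f b) \<le> dnf (map_clauses ys)"
    by (simp add: diff_le_dnf_iff_covered)
qed

definition extend :: "'a \<Rightarrow> 'b" where
  "extend x = dnf (map_clauses (SOME xs. xs \<in> lists (L \<times> L) \<and> dnf xs = x))"

lemma extend_dnf:
  assumes "xs \<in> lists (L \<times> L)"
  shows "extend (dnf xs) = dnf (map_clauses xs)"
proof -
  define ys where "ys = (SOME ys. ys \<in> lists (L \<times> L) \<and> dnf ys = dnf xs)"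
  have ys: "ys \<in> lists (L \<times> L)" "dnf ys = dnf xs"
    unfolding ys_def using someI[of "\<lambda>ys. ys \<in> lists (L \<times> L) \<and> dnf ys = dnf xs"] assms
    by blast+
  then show ?thesis
    unfolding extend_def ys_def[symmetric]
    using assms by (metis antisym order_refl dnf_map_clauses_mono)
qed

lemma extend_eq: "a \<in> L \<Longrightarrow> extend a = f a"
  using extend_dnf[of "[(a, bot)]"] by (simp add: bot_mem map_bot)

lemma extend_bot: "extend bot = bot"
  using extend_dnf[of "[]"] by simp

lemma extend_top: "extend top = top"
  using extend_eq top_mem map_top by simp

lemma extend_sup: "x \<in> dnfs L \<Longrightarrow> y \<in> dnfs L \<Longrightarrow> extend (sup x y) = sup (extend x) (extend y)"
  by (elim dnfsE) (simp flip: dnf_append add: extend_dnf)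

lemma map_clauses_dnf_meet:
  "xs \<in> lists (L \<times> L) \<Longrightarrow> ys \<in> lists (L \<times> L)
    \<Longrightarrow> map_clauses (dnf_meet xs ys) = dnf_meet (map_clauses xs) (map_clauses ys)"
  by (induction xs) (fastforce simp: dnf_meet_def map_sup map_inf)+

lemma extend_inf: "x \<in> dnfs L \<Longrightarrow> y \<in> dnfs L \<Longrightarrow> extend (inf x y) = inf (extend x) (extend y)"
  by (elim dnfsE) (simp flip: dnf_dnf_meet add: extend_dnf dnf_meet_in_lists map_clauses_dnf_meet)

lemma extend_compl: 
  assumes "x \<in> dnfs L"
  shows "extend (- x) = - extend x"
proof -
  have "- x \<in> dnfs L" using assms by (rule compl_mem_dnfs)
  then have "inf (extend x) (extend (- x)) = bot" and "sup (extend x) (extend (- x)) = top"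
    using assms by (simp_all flip: extend_inf extend_sup add: extend_bot extend_top)
  then show ?thesis
    by (simp add: compl_unique)
qed

end

lemma interior_mono: "interior_alg g \<Longrightarrow> x \<le> y \<Longrightarrow> g x \<le> g y"
  unfolding interior_alg_def by (metis inf.absorb_iff2 inf.orderI)

lemma interior_mem_opens: "interior_alg g \<Longrightarrow> g x \<in> opens g"
  by (simp add: interior_alg_def opens_def)

lemma himp_mem_opens: "interior_alg g \<Longrightarrow> himp g a b \<in> opens g"
  unfolding himp_def by (rule interior_mem_opens)

lemma bounded_sublattice_opens:
  assumes "interior_alg g"
  shows "bounded_sublattice (opens g)"
proof
  show "bot \<in> opens g" "top \<in> opens g"
    using assms by (auto simp: interior_alg_def opens_def intro: antisym)
  fix x y assume "x \<in> opens g" "y \<in> opens g"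
  then have "g x = x" "g y = y" by (simp_all add: opens_def)
  moreover have "sup (g x) (g y) \<le> g (sup x y)"
    using interior_mono[OF assms] by simp
  ultimately show "sup x y \<in> opens g" "inf x y \<in> opens g"
    using assms by (auto simp: interior_alg_def opens_def intro: antisym)
qed

lemma interior_compl_dnf_Cons:
  "interior_alg g \<Longrightarrow> g (- dnf ((a, b) # xs)) = inf (himp g a b) (g (- dnf xs))"
  by (simp add: interior_alg_def himp_def)

lemma bool_subalg_UNIV: "bool_subalg UNIV"
  by (simp add: bool_subalg_def)

lemma bool_subalg_star: "bool_subalg (star g)"
  by (auto simp: bool_subalg_def star_def)

lemma opens_subset_star: "opens g \<subseteq> star g"
  by (auto simp: star_def)

lemma star_subset: "bool_subalg S \<Longrightarrow> opens g \<subseteq> S \<Longrightarrow> star g \<subseteq> S"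
  unfolding star_def by blast

lemma star_eq_dnfs:
  assumes "interior_alg g"
  shows "star g = dnfs (opens g)"
proof
  interpret bounded_sublattice "opens g"
    using assms by (rule bounded_sublattice_opens)
  show "star g \<subseteq> dnfs (opens g)"
    by (rule star_subset) (simp_all add: bool_subalg_dnfs subset_dnfs)
  show "dnfs (opens g) \<subseteq> star g"
    by (rule dnfs_subset) (simp_all add: bool_subalg_star opens_subset_star)
qed

lemma int_hom_on_UNIV_iff: "int_hom_on UNIV UNIV gA gB h \<longleftrightarrow> int_hom gA gB h"
  unfolding int_hom_on_def int_hom_def by blast

lemma heyting_hom_restrict:
  assumes "interior_alg gA" and h: "int_hom_on S T gA gB h"
    and S: "bool_subalg S" "opens gA \<subseteq> S"
  shows "heyting_hom gA gB (restrict h (opens gA))"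
proof -
  interpret bounded_sublattice "opens gA"
    using assms(1) by (rule bounded_sublattice_opens)
  have "h a \<in> opens gB" if "a \<in> opens gA" for a
    using that h S(2) by (force simp: int_hom_on_def opens_def)
  moreover have "h (himp gA a b) = himp gB (h a) (h b)" if "a \<in> opens gA" "b \<in> opens gA" for a b
  proof -
    have "a \<in> S" "b \<in> S" "- a \<in> S" "sup (- a) b \<in> S"
      using that S unfolding bool_subalg_def by blast+
    then show ?thesis
      using h unfolding himp_def int_hom_on_def by simp
  qed
  ultimately show ?thesis
    using h S(2) assms(1)
    by (auto simp: heyting_hom_def int_hom_on_def subset_iff bot_mem top_mem sup_mem inf_mem
        himp_mem_opens)
qed

lemma int_hom_eq_on_star:
  assumes h: "int_hom_on (star gA) T gA gB h" and h': "int_hom gA gB h'"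
    and eq: "\<forall>a \<in> opens gA. h' a = h a"
  shows "\<forall>x \<in> star gA. h' x = h x"
proof -
  have "bool_subalg {x \<in> star gA. h' x = h x}"
    using bool_subalg_star[of gA] h h' unfolding bool_subalg_def int_hom_on_def int_hom_def by auto
  then have "star gA \<subseteq> {x \<in> star gA. h' x = h x}"
    using eq opens_subset_star by (intro star_subset) auto
  then show ?thesis by blast
qed

lemma bounded_lattice_hom_on_heyting_hom:
  assumes "interior_alg gA" and "heyting_hom gA gB f"
  shows "bounded_lattice_hom_on (opens gA) f"
proof -
  interpret bounded_sublattice "opens gA"
    using assms(1) by (rule bounded_sublattice_opens)
  show ?thesis
    using assms(2) by unfold_locales (simp_all add: heyting_hom_def)
qed

lemma heyting_hom_interior_compl_dnf:
  assumes "interior_alg gA" "interior_alg gB" "heyting_hom gA gB f"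
    and "xs \<in> lists (opens gA \<times> opens gA)"
  shows "f (gA (- dnf xs)) = gB (- dnf (map (map_prod f f) xs))"
  using assms(4)
proof (induction xs rule: dnf.induct)
  case 1
  then show ?case
    using assms(1-3) by (simp add: interior_alg_def heyting_hom_def)
next
  case (2 a b xs)
  then have ab: "a \<in> opens gA" "b \<in> opens gA" and xs: "xs \<in> lists (opens gA \<times> opens gA)"
    by simp_all
  have "f (gA (- dnf ((a, b) # xs))) = f (inf (himp gA a b) (gA (- dnf xs)))"
    using assms(1) by (simp only: interior_compl_dnf_Cons)
  also have "\<dots> = inf (himp gB (f a) (f b)) (f (gA (- dnf xs)))"
    using assms(1,3) ab by (simp add: heyting_hom_def himp_mem_opens interior_mem_opens)
  also have "\<dots> = gB (- dnf (map (map_prod f f) ((a, b) # xs)))"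
    using assms(2) "2.IH"[OF xs] by (simp only: interior_compl_dnf_Cons list.map map_prod_simp)
  finally show ?case .
qed

lemma heyting_hom_extends_to_star:
  assumes iaA: "interior_alg gA" and iaB: "interior_alg gB" and f: "heyting_hom gA gB f"
  obtains H where "int_hom_on (star gA) (star gB) gA gB H" and "\<forall>a \<in> opens gA. H a = f a"
proof -
  interpret bounded_lattice_hom_on "opens gA" f
    using iaA f by (rule bounded_lattice_hom_on_heyting_hom)
  have maps_to: "extend x \<in> dnfs (opens gB)" if x: "x \<in> dnfs (opens gA)" for x
  proof -
    obtain xs where xs: "xs \<in> lists (opens gA \<times> opens gA)" "x = dnf xs"
      using x by (rule dnfsE)
    then have "map_clauses xs \<in> lists (opens gB \<times> opens gB)"
      using f by (fastforce simp: heyting_hom_def)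
    then show ?thesis
      using xs by (simp add: extend_dnf dnf_mem_dnfs)
  qed
  have interior: "extend (gA x) = gB (extend x)" if x: "x \<in> dnfs (opens gA)" for x
  proof -
    obtain zs where zs: "zs \<in> lists (opens gA \<times> opens gA)" "- x = dnf zs"
      using compl_mem_dnfs[OF x] by (rule dnfsE)
    have "extend (gA x) = f (gA (- dnf zs))"
      using iaA zs(2) by (simp add: extend_eq interior_mem_opens flip: zs(2))
    also have "\<dots> = gB (- extend (- x))"
      using iaA iaB f zs by (simp add: heyting_hom_interior_compl_dnf extend_dnf)
    finally show ?thesis
      using x by (simp add: extend_compl)
  qed
  have "int_hom_on (star gA) (star gB) gA gB extend"
    unfolding int_hom_on_def star_eq_dnfs[OF iaA] star_eq_dnfs[OF iaB]
    by (simp add: maps_to interior extend_bot extend_top extend_sup extend_inf extend_compl)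
  then show thesis
    using that extend_eq by blast
qed

lemma heyting_hom_restrict_int_hom:
  "interior_alg gA \<Longrightarrow> int_hom gA gB h \<Longrightarrow> heyting_hom gA gB (restrict h (opens gA))"
  by (rule heyting_hom_restrict[where T = UNIV, OF _ _ bool_subalg_UNIV subset_UNIV])
    (simp_all add: int_hom_on_UNIV_iff)

theorem lemma5p10:
  fixes gA :: "'a::boolean_algebra \<Rightarrow> 'a" and gB :: "'b::boolean_algebra \<Rightarrow> 'b"
  assumes "interior_alg gA" and "interior_alg gB"
  shows "{restrict h (opens gA) | h. int_hom gA gB h}
           = {f \<in> extensional (opens gA). heyting_hom gA gB f}
         \<longleftrightarrow> (\<forall>h. int_hom_on (star gA) (star gB) gA gB h \<longrightarrow>
               (\<exists>h'. int_hom gA gB h' \<and> (\<forall>x\<in>star gA. h' x = h x)))"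
proof (intro iffI allI impI)
  fix h
  assume restrictions: "{restrict h (opens gA) | h. int_hom gA gB h}
           = {f \<in> extensional (opens gA). heyting_hom gA gB f}"
    and h: "int_hom_on (star gA) (star gB) gA gB h"
  have "restrict h (opens gA) \<in> {f \<in> extensional (opens gA). heyting_hom gA gB f}"
    using heyting_hom_restrict[OF assms(1) h bool_subalg_star opens_subset_star] by simp
  then obtain h' where h': "int_hom gA gB h'" "restrict h' (opens gA) = restrict h (opens gA)"
    unfolding restrictions[symmetric] by (auto simp del: restrict_apply)
  then show "\<exists>h'. int_hom gA gB h' \<and> (\<forall>x\<in>star gA. h' x = h x)"
    using h int_hom_eq_on_star by (metis restrict_apply')
next
  assume extensions: "\<forall>h. int_hom_on (star gA) (star gB) gA gB h \<longrightarrow>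
               (\<exists>h'. int_hom gA gB h' \<and> (\<forall>x\<in>star gA. h' x = h x))"
  show "{restrict h (opens gA) | h. int_hom gA gB h}
           = {f \<in> extensional (opens gA). heyting_hom gA gB f}"
  proof (intro equalityI subsetI)
    fix f assume "f \<in> {f \<in> extensional (opens gA). heyting_hom gA gB f}"
    then have f: "f \<in> extensional (opens gA)" "heyting_hom gA gB f" by simp_all
    obtain H where "int_hom_on (star gA) (star gB) gA gB H" and H: "\<forall>a \<in> opens gA. H a = f a"
      using heyting_hom_extends_to_star[OF assms f(2)] .
    then obtain h where "int_hom gA gB h" and "\<forall>x \<in> star gA. h x = H x"
      using extensions by blast
    moreover from this(2) have "restrict h (opens gA) = f"
      using f(1) H opens_subset_star[of gA] by (intro extensionalityI[of _ "opens gA"]) auto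
    ultimately show "f \<in> {restrict h (opens gA) | h. int_hom gA gB h}" by blast
  qed (auto simp: assms(1) heyting_hom_restrict_int_hom)
qed

end
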